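(* Let $Q$ be a finite connected quandle, $A$ an abelian group, $\theta:Q\times Q\to A$ a quandle cocycle, and $E=Q\times_\theta A$. If $\theta$ is not cohomologous to the trivial cocycle (i.e. the cover $E$ of $Q$ is not trivial), then $Q$ has a connected cover of size $p\,|Q|$ for some prime $p$.
   Context: A quandle is a set $Q$ with a binary operation $*$ such that every left translation $L_x:y\mapsto x*y$ is bijective, $x*(y*z)=(x*y)*(x*z)$ and $x*x=x$; $Q$ is connected if $\langle L_x:x\in Q\rangle$ is transitive. A quandle cocycle with values in $A$ is $\theta:Q\times Q\to A$ with $\theta_{x*y,x*z}+\theta_{x,z}=\theta_{x,y*z}+\theta_{y,z}$ and $\theta_{x,x}=0$; $E=Q\times_\theta A$ is $Q\times A$ with $(x,a)*(y,b)=(x*y,\theta_{x,y}+b)$. $\theta$ is cohomologous to the trivial cocycle if there is $\gamma:Q\to\mathrm{Sym}_A$ with $(b\mapsto\theta_{x,y}+b)=\gamma_{x*y}\gamma_y^{-1}$ for all $x,y$ (equivalently, since $Q$ is connected, $\theta_{x,y}=\gamma_{x*y}-\gamma_y$ for some $\gamma:Q\to A$). A cover of $Q$ is a quandle $E'$ with a surjective homomorphism $\pi:E'\to Q$ such that $\pi(u)=\pi(v)$ implies $L_u=L_v$ in $E'$; it is connected if $E'$ is connected, and its size is $|E'|$. *)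

theory Defs
  imports "HOL-Computational_Algebra.Primes"
begin

definition quandle :: "'q set \<Rightarrow> ('q \<Rightarrow> 'q \<Rightarrow> 'q) \<Rightarrow> bool" where
  "quandle Q op \<longleftrightarrow>
     (\<forall>x\<in>Q. bij_betw (op x) Q Q) \<and>
     (\<forall>x\<in>Q. \<forall>y\<in>Q. \<forall>z\<in>Q. op x (op y z) = op (op x y) (op x z)) \<and>
     (\<forall>x\<in>Q. op x x = x)"

text \<open>Connected: the group generated by the left translations acts transitively.
  The orbit of a point under this group is its class under the equivalence
  closure of the relation y ~ x * y (x, y in Q).\<close>
definition quandle_connected :: "'q set \<Rightarrow> ('q \<Rightarrow> 'q \<Rightarrow> 'q) \<Rightarrow> bool" where
  "quandle_connected Q op \<longleftrightarrow>
     (let R = {(y, op x y) | x y. x \<in> Q \<and> y \<in> Q}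
      in \<forall>a\<in>Q. \<forall>b\<in>Q. (a, b) \<in> (R \<union> R\<inverse>)\<^sup>*)"

definition quandle_cocycle :: "'q set \<Rightarrow> ('q \<Rightarrow> 'q \<Rightarrow> 'q) \<Rightarrow> ('q \<Rightarrow> 'q \<Rightarrow> 'a::ab_group_add) \<Rightarrow> bool" where
  "quandle_cocycle Q op \<theta> \<longleftrightarrow>
     (\<forall>x\<in>Q. \<forall>y\<in>Q. \<forall>z\<in>Q.
        \<theta> (op x y) (op x z) + \<theta> x z = \<theta> x (op y z) + \<theta> y z) \<and>
     (\<forall>x\<in>Q. \<theta> x x = 0)"

definition cohomologous_trivial :: "'q set \<Rightarrow> ('q \<Rightarrow> 'q \<Rightarrow> 'q) \<Rightarrow> ('q \<Rightarrow> 'q \<Rightarrow> 'a::ab_group_add) \<Rightarrow> bool" where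
  "cohomologous_trivial Q op \<theta> \<longleftrightarrow>
     (\<exists>\<gamma> :: 'q \<Rightarrow> 'a \<Rightarrow> 'a. (\<forall>x\<in>Q. bij (\<gamma> x)) \<and>
        (\<forall>x\<in>Q. \<forall>y\<in>Q. (\<lambda>b. \<theta> x y + b) = \<gamma> (op x y) \<circ> inv (\<gamma> y)))"

definition quandle_cover :: "'e set \<Rightarrow> ('e \<Rightarrow> 'e \<Rightarrow> 'e) \<Rightarrow> 'q set \<Rightarrow> ('q \<Rightarrow> 'q \<Rightarrow> 'q) \<Rightarrow> ('e \<Rightarrow> 'q) \<Rightarrow> bool" where
  "quandle_cover E opE Q op \<pi> \<longleftrightarrow>
     quandle E opE \<and>
     \<pi> ` E = Q \<and>
     (\<forall>u\<in>E. \<forall>v\<in>E. \<pi> (opE u v) = op (\<pi> u) (\<pi> v)) \<and>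
     (\<forall>u\<in>E. \<forall>v\<in>E. \<pi> u = \<pi> v \<longrightarrow> (\<forall>w\<in>E. opE u w = opE v w))"

end

theory Submission
  imports Defs
begin

(*
  Fix q0 in Q and let O be the orbit of (q0, 0) in the extension E = Q \<times>\<^sub>\<theta> A under the
  translations of E.  Since Q is connected, O lies over all of Q; choosing a point (y, lift y)
  of O over each y replaces \<theta> by the cohomologous cocycle
  \<eta> x y = \<theta> x y + lift y - lift (x * y), whose values lie in, and generate, the fibre
  H = {c. (q0, c) \<in> O}.  If H = 0, then \<theta> is a coboundary.  Otherwise H is a nonzero finitely
  generated abelian group, so it has a maximal proper subgroup and hence an epimorphism \<phi> onto
  Z/pZ with p prime.  The cover of Q defined by the Z/pZ-valued cocycle \<phi> \<circ> \<eta> has p |Q|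
  elements, and it is connected because (y, b) \<mapsto> (y, \<phi> (b - lift y)) maps O onto it and
  translations to translations.
*)

fun nat_smult :: "nat \<Rightarrow> 'a::ab_group_add \<Rightarrow> 'a" where
  "nat_smult 0 x = 0"
| "nat_smult (Suc n) x = x + nat_smult n x"

lemma nat_smult_add: "nat_smult (m + n) x = nat_smult m x + nat_smult n x"
  by (induction m) (simp_all add: add.assoc)

lemma nat_smult_diff: "nat_smult n (x - y) = nat_smult n x - nat_smult n y"
  by (induction n) (simp_all add: algebra_simps)

lemma nat_smult_mult: "nat_smult (m * n) x = nat_smult m (nat_smult n x)"
  by (induction m) (simp_all add: nat_smult_add)

definition int_smult :: "int \<Rightarrow> 'a::ab_group_add \<Rightarrow> 'a" where
  "int_smult i x = nat_smult (nat i) x - nat_smult (nat (- i)) x"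

lemma int_smult_of_nat_diff: "int_smult (int m - int n) x = nat_smult m x - nat_smult n x"
proof (cases "n \<le> m")
  case True
  then obtain k where "m = n + k" using le_Suc_ex by blast
  then show ?thesis by (simp add: int_smult_def nat_smult_add)
next
  case False
  then obtain k where "n = m + k" using le_Suc_ex by (metis nat_le_linear)
  with False show ?thesis by (simp add: int_smult_def nat_smult_add)
qed

lemma int_smult_add: "int_smult (i + j) x = int_smult i x + int_smult j x"
proof -
  obtain m n m' n' where "i = int m - int n" "j = int m' - int n'"
    by (metis int_diff_cases)
  moreover have "int m - int n + (int m' - int n') = int (m + m') - int (n + n')" by simp
  ultimately show ?thesis
    by (simp only: int_smult_of_nat_diff nat_smult_add) (simp add: algebra_simps)
qed

lemma int_smult_mult: "int_smult (i * j) x = int_smult i (int_smult j x)"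
proof -
  obtain m n m' n' where "i = int m - int n" "j = int m' - int n'"
    by (metis int_diff_cases)
  moreover have "(int m - int n) * (int m' - int n') = int (m * m' + n * n') - int (m * n' + n * m')"
    by (simp add: algebra_simps)
  ultimately show ?thesis
    by (simp only: int_smult_of_nat_diff nat_smult_add nat_smult_mult nat_smult_diff)
      (simp add: algebra_simps)
qed

lemma int_smult_0 [simp]: "int_smult 0 x = 0"
  and int_smult_1 [simp]: "int_smult 1 x = x"
  by (simp_all add: int_smult_def)

lemma int_smult_uminus: "int_smult (- i) x = - int_smult i x"
  by (simp add: int_smult_def)

lemma int_smult_diff: "int_smult (i - j) x = int_smult i x - int_smult j x"
  using int_smult_add[of i "- j" x] by (simp add: int_smult_uminus)

definition add_subgroup :: "'a::ab_group_add set \<Rightarrow> bool" where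
  "add_subgroup S \<longleftrightarrow> 0 \<in> S \<and> (\<forall>x\<in>S. \<forall>y\<in>S. x + y \<in> S) \<and> (\<forall>x\<in>S. - x \<in> S)"

lemma add_subgroupI:
  assumes "0 \<in> S" "\<And>x y. x \<in> S \<Longrightarrow> y \<in> S \<Longrightarrow> x + y \<in> S" "\<And>x. x \<in> S \<Longrightarrow> - x \<in> S"
  shows "add_subgroup S"
  using assms by (simp add: add_subgroup_def)

lemma add_subgroup_zero: "add_subgroup S \<Longrightarrow> 0 \<in> S"
  and add_subgroup_add: "add_subgroup S \<Longrightarrow> x \<in> S \<Longrightarrow> y \<in> S \<Longrightarrow> x + y \<in> S"
  and add_subgroup_uminus: "add_subgroup S \<Longrightarrow> x \<in> S \<Longrightarrow> - x \<in> S"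
  by (simp_all add: add_subgroup_def)

lemma add_subgroup_diff: "add_subgroup S \<Longrightarrow> x \<in> S \<Longrightarrow> y \<in> S \<Longrightarrow> x - y \<in> S"
  by (metis add_subgroup_add add_subgroup_uminus diff_conv_add_uminus)

lemma add_subgroup_int_smult:
  assumes "add_subgroup S" "x \<in> S" shows "int_smult i x \<in> S"
proof -
  have "nat_smult n x \<in> S" for n
    by (induction n) (simp_all add: assms add_subgroup_zero add_subgroup_add)
  then show ?thesis by (simp add: int_smult_def assms add_subgroup_diff)
qed

definition add_span :: "'a::ab_group_add set \<Rightarrow> 'a set" where
  "add_span T = \<Inter> {S. add_subgroup S \<and> T \<subseteq> S}"

lemma add_subgroup_add_span: "add_subgroup (add_span T)"
  by (auto simp: add_span_def add_subgroup_def)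

lemma add_span_superset: "T \<subseteq> add_span T"
  by (auto simp: add_span_def)

lemma add_span_least: "add_subgroup S \<Longrightarrow> T \<subseteq> S \<Longrightarrow> add_span T \<subseteq> S"
  by (auto simp: add_span_def)

lemma add_subgroup_sum_int_multiples:
  assumes "add_subgroup M"
  shows "add_subgroup {m + int_smult i y | m i. m \<in> M}"
proof (rule add_subgroupI)
  show "0 \<in> {m + int_smult i y | m i. m \<in> M}"
    using assms by (auto simp: add_subgroup_zero intro!: exI[of _ 0])
next
  fix u v assume "u \<in> {m + int_smult i y | m i. m \<in> M}" "v \<in> {m + int_smult i y | m i. m \<in> M}"
  then obtain m i m' i' where "u = m + int_smult i y" "v = m' + int_smult i' y" "m \<in> M" "m' \<in> M"
    by blast
  then have "u + v = (m + m') + int_smult (i + i') y" "m + m' \<in> M"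
    using assms by (simp_all add: int_smult_add add_subgroup_add algebra_simps)
  then show "u + v \<in> {m + int_smult i y | m i. m \<in> M}" by blast
next
  fix u assume "u \<in> {m + int_smult i y | m i. m \<in> M}"
  then obtain m i where "u = m + int_smult i y" "m \<in> M" by blast
  then have "- u = - m + int_smult (- i) y" "- m \<in> M"
    using assms by (simp_all add: int_smult_uminus add_subgroup_uminus)
  then show "- u \<in> {m + int_smult i y | m i. m \<in> M}" by blast
qed

section \<open>Finitely generated abelian groups map onto some \<open>\<int>/p\<int>\<close>\<close>

lemma int_ideal_eq_multiples:
  fixes I :: "int set"
  assumes add: "\<And>i j. i \<in> I \<Longrightarrow> j \<in> I \<Longrightarrow> i + j \<in> I"
    and mult: "\<And>i k. i \<in> I \<Longrightarrow> k * i \<in> I"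
    and "i \<in> I" "i \<noteq> 0"
  obtains n :: nat where "0 < n" "I = {i. int n dvd i}"
proof -
  have "\<bar>i\<bar> \<in> I" using \<open>i \<in> I\<close> mult[of i "-1"] by (cases "0 \<le> i") simp_all
  then have "\<exists>n::nat. 0 < n \<and> int n \<in> I"
    using \<open>i \<noteq> 0\<close> by (intro exI[of _ "nat \<bar>i\<bar>"]) simp
  define n where "n = (LEAST n::nat. 0 < n \<and> int n \<in> I)"
  have n: "0 < n" "int n \<in> I"
    using LeastI_ex[OF \<open>\<exists>n. 0 < n \<and> int n \<in> I\<close>] by (simp_all add: n_def)
  have n_least: "n \<le> m" if "0 < m" "int m \<in> I" for m
    using that by (simp add: n_def Least_le)
  have "int n dvd j" if "j \<in> I" for j
  proof -
    have "j + (- (j div int n)) * int n \<in> I" using add mult that n(2) by blast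
    then have r: "j mod int n \<in> I" by (simp add: minus_div_mult_eq_mod[symmetric])
    have "0 \<le> j mod int n" "j mod int n < int n" using n(1) by simp_all
    with r n_least[of "nat (j mod int n)"] have "j mod int n = 0" by fastforce
    then show ?thesis by (simp add: dvd_eq_mod_eq_0)
  qed
  then have "I = {i. int n dvd i}"
    using mult[OF n(2)] by (auto simp: dvd_def mult.commute)
  with n(1) show ?thesis by (rule that)
qed

lemma int_maximal_ideal_prime:
  fixes I :: "int set"
  assumes add: "\<And>i j. i \<in> I \<Longrightarrow> j \<in> I \<Longrightarrow> i + j \<in> I"
    and mult: "\<And>i k. i \<in> I \<Longrightarrow> k * i \<in> I"
    and "1 \<notin> I"
    and maximal: "\<And>k. k \<notin> I \<Longrightarrow> \<exists>i. 1 - k * i \<in> I"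
  obtains p :: nat where "prime p" "I = {i. int p dvd i}"
proof -
  have "\<exists>i\<in>I. i \<noteq> 0"
  proof (cases "2 \<in> I")
    case False
    then obtain i where "1 - 2 * i \<in> I" using maximal by blast
    moreover have "1 - 2 * i \<noteq> 0" by presburger
    ultimately show ?thesis by blast
  qed (intro bexI[of _ 2], simp_all)
  then obtain p where "0 < p" and I: "I = {i. int p dvd i}"
    using int_ideal_eq_multiples[OF add mult] by blast
  have "prime p"
    unfolding prime_nat_iff
  proof (intro conjI allI impI)
    show "1 < p" using \<open>0 < p\<close> \<open>1 \<notin> I\<close> I by (cases "p = 1") auto
    fix d assume "d dvd p"
    show "d = 1 \<or> d = p"
    proof (rule ccontr)
      assume "\<not> (d = 1 \<or> d = p)"
      moreover have "int d \<in> I \<Longrightarrow> d = p" using \<open>d dvd p\<close> I by (simp add: dvd_antisym)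
      ultimately obtain i where "int p dvd 1 - int d * i" using maximal I by blast
      then have "int d dvd 1 - int d * i + int d * i"
        using \<open>d dvd p\<close> by (meson dvd_add dvd_trans dvd_triv_left int_dvd_int_iff)
      with \<open>\<not> (d = 1 \<or> d = p)\<close> show False by simp
    qed
  qed
  from this I show ?thesis by (rule that)
qed

(* An epimorphism H \<rightarrow> Z/pZ, given by integer representatives of its values. *)
definition hom_onto_zmod :: "'a::ab_group_add set \<Rightarrow> nat \<Rightarrow> ('a \<Rightarrow> int) \<Rightarrow> bool" where
  "hom_onto_zmod H p \<phi> \<longleftrightarrow>
     (\<forall>x\<in>H. \<forall>y\<in>H. \<phi> (x + y) mod int p = (\<phi> x + \<phi> y) mod int p) \<and>
     (\<forall>j. \<exists>x\<in>H. \<phi> x mod int p = j mod int p)"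

lemma hom_onto_zmod_zero:
  assumes "hom_onto_zmod H p \<phi>" and "0 \<in> H" shows "\<phi> 0 mod int p = 0"
proof -
  have "\<phi> 0 mod int p = (\<phi> 0 + \<phi> 0) mod int p"
    using assms by (metis add_0 hom_onto_zmod_def)
  then show ?thesis by (simp add: mod_eq_dvd_iff flip: dvd_eq_mod_eq_0)
qed

locale maximal_add_subgroup =
  fixes H M :: "'a::ab_group_add set"
  assumes add_subgroup_H: "add_subgroup H" and add_subgroup_M: "add_subgroup M"
    and M_subset: "M \<subseteq> H" and M_neq: "M \<noteq> H"
    and maximal: "\<And>N. add_subgroup N \<Longrightarrow> M \<subseteq> N \<Longrightarrow> N \<subseteq> H \<Longrightarrow> N = M \<or> N = H"
begin

lemma sum_int_multiples_eq:
  assumes "y \<in> H" "y \<notin> M"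
  shows "{m + int_smult i y | m i. m \<in> M} = H"
proof -
  let ?N = "{m + int_smult i y | m i. m \<in> M}"
  have "y \<in> ?N"
    using add_subgroup_M by (auto simp: add_subgroup_zero intro!: exI[of _ 0] exI[of _ 1])
  moreover have "M \<subseteq> ?N" by (force intro: exI[of _ 0])
  moreover have "?N \<subseteq> H"
    using add_subgroup_H M_subset assms(1) by (auto simp: add_subgroup_add add_subgroup_int_smult)
  ultimately show ?thesis
    using maximal[OF add_subgroup_sum_int_multiples[OF add_subgroup_M]] \<open>y \<notin> M\<close> by blast
qed

lemma int_smult_ideal_prime:
  assumes "h \<in> H" "h \<notin> M"
  obtains p where "prime p" "{i. int_smult i h \<in> M} = {i. int p dvd i}"
proof (rule int_maximal_ideal_prime)
  show "i + j \<in> {i. int_smult i h \<in> M}" if "i \<in> {i. int_smult i h \<in> M}" "j \<in> {i. int_smult i h \<in> M}" for i j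
    using that add_subgroup_M by (simp add: int_smult_add add_subgroup_add)
  show "k * i \<in> {i. int_smult i h \<in> M}" if "i \<in> {i. int_smult i h \<in> M}" for i k
    using that add_subgroup_M by (simp add: int_smult_mult add_subgroup_int_smult)
  show "1 \<notin> {i. int_smult i h \<in> M}" using \<open>h \<notin> M\<close> by simp
  show "\<exists>i. 1 - k * i \<in> {i. int_smult i h \<in> M}" if "k \<notin> {i. int_smult i h \<in> M}" for k
  proof -
    have "int_smult k h \<in> H" using add_subgroup_H assms(1) by (rule add_subgroup_int_smult)
    with that obtain m i where h_eq: "h = m + int_smult i (int_smult k h)" and "m \<in> M"
      using sum_int_multiples_eq[of "int_smult k h"] assms(1) by auto
    have "int_smult (1 - k * i) h = h - int_smult i (int_smult k h)"
      by (simp add: int_smult_diff int_smult_mult mult.commute)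
    also have "\<dots> = m" by (subst (1) h_eq) simp
    finally show ?thesis using \<open>m \<in> M\<close> by auto
  qed
qed

lemma ex_hom_onto_zmod:
  obtains p \<phi> where "prime p" "hom_onto_zmod H p \<phi>"
proof -
  obtain h where h: "h \<in> H" "h \<notin> M" using M_subset M_neq by blast
  then obtain p where "prime p" and I: "{i. int_smult i h \<in> M} = {i. int p dvd i}"
    by (rule int_smult_ideal_prime)
  define \<phi> where "\<phi> x = (SOME i. x - int_smult i h \<in> M)" for x
  have \<phi>: "x - int_smult (\<phi> x) h \<in> M" if "x \<in> H" for x
  proof -
    from that obtain m i where "x = m + int_smult i h" "m \<in> M"
      using sum_int_multiples_eq[OF h] by auto
    then have "x - int_smult i h \<in> M" by simp
    then show ?thesis unfolding \<phi>_def by (rule someI)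
  qed
  have \<phi>_mod: "\<phi> x mod int p = i mod int p" if "x \<in> H" "x - int_smult i h \<in> M" for x i
  proof -
    have "int_smult (i - \<phi> x) h = (x - int_smult (\<phi> x) h) - (x - int_smult i h)"
      by (simp add: int_smult_diff)
    then have "int_smult (i - \<phi> x) h \<in> M"
      using add_subgroup_diff[OF add_subgroup_M \<phi>[OF \<open>x \<in> H\<close>] that(2)] by simp
    then show ?thesis using I by (auto simp: mod_eq_dvd_iff dvd_diff_commute)
  qed
  have "hom_onto_zmod H p \<phi>"
    unfolding hom_onto_zmod_def
  proof (intro conjI ballI allI)
    fix x y assume "x \<in> H" "y \<in> H"
    have eq: "(x + y) - int_smult (\<phi> x + \<phi> y) h = (x - int_smult (\<phi> x) h) + (y - int_smult (\<phi> y) h)"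
      by (simp add: int_smult_add)
    have "(x + y) - int_smult (\<phi> x + \<phi> y) h \<in> M"
      unfolding eq using \<phi> \<open>x \<in> H\<close> \<open>y \<in> H\<close> add_subgroup_M by (simp add: add_subgroup_add)
    then show "\<phi> (x + y) mod int p = (\<phi> x + \<phi> y) mod int p"
      using \<phi>_mod \<open>x \<in> H\<close> \<open>y \<in> H\<close> add_subgroup_H by (simp add: add_subgroup_add)
  next
    fix j
    have "int_smult j h \<in> H" using add_subgroup_H h(1) by (rule add_subgroup_int_smult)
    moreover have "int_smult j h - int_smult j h \<in> M" using add_subgroup_M by (simp add: add_subgroup_zero)
    ultimately show "\<exists>x\<in>H. \<phi> x mod int p = j mod int p" using \<phi>_mod by blast
  qed
  with \<open>prime p\<close> show ?thesis by (rule that)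
qed

end

lemma add_subgroup_Union_chain:
  assumes "C \<noteq> {}" and "\<And>K. K \<in> C \<Longrightarrow> add_subgroup K"
    and "\<And>A B. A \<in> C \<Longrightarrow> B \<in> C \<Longrightarrow> A \<subseteq> B \<or> B \<subseteq> A"
  shows "add_subgroup (\<Union>C)"
proof (rule add_subgroupI)
  show "0 \<in> \<Union>C" using assms(1,2) by (auto simp: add_subgroup_zero)
next
  fix x y assume "x \<in> \<Union>C" "y \<in> \<Union>C"
  then obtain A B where "A \<in> C" "B \<in> C" "x \<in> A" "y \<in> B" by auto
  with assms(2)[of A] assms(2)[of B] assms(3)[of A B] have "x + y \<in> A \<or> x + y \<in> B"
    by (auto intro: add_subgroup_add)
  with \<open>A \<in> C\<close> \<open>B \<in> C\<close> show "x + y \<in> \<Union>C" by blast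
next
  fix x assume "x \<in> \<Union>C"
  with assms(2) show "- x \<in> \<Union>C" by (blast intro: add_subgroup_uminus)
qed

(* Zorn's lemma for the subgroups of span T that miss some element of T: as T is finite,
   the union of a chain of them still misses some element of T. *)
lemma finitely_generated_ex_maximal_subgroup:
  fixes T :: "'a::ab_group_add set"
  assumes "finite T" and "add_span T \<noteq> {0}"
  obtains M where "maximal_add_subgroup (add_span T) M"
proof -
  define F where "F = {K. add_subgroup K \<and> K \<subseteq> add_span T \<and> \<not> T \<subseteq> K}"
  have T_nonzero: "\<not> T \<subseteq> {0}"
    using assms(2) add_span_least[of "{0}" T] add_subgroup_zero[OF add_subgroup_add_span]
    by (auto simp: add_subgroup_def)
  have "{0} \<in> F"
    using T_nonzero by (auto simp: F_def add_subgroup_def add_subgroup_zero[OF add_subgroup_add_span])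
  moreover have "\<Union>C \<in> F" if "C \<noteq> {}" and C: "subset.chain F C" for C
  proof -
    have CF: "C \<subseteq> F" using C by (simp add: subset_chain_def)
    have "add_subgroup (\<Union>C)"
    proof (rule add_subgroup_Union_chain[OF \<open>C \<noteq> {}\<close>])
      show "add_subgroup K" if "K \<in> C" for K using that CF by (auto simp: F_def)
      show "A \<subseteq> B \<or> B \<subseteq> A" if "A \<in> C" "B \<in> C" for A B
        using C that by (simp add: subset_chain_def)
    qed
    moreover have "\<not> T \<subseteq> \<Union>C"
    proof
      assume "T \<subseteq> \<Union>C"
      then obtain B where "B \<in> C" "T \<subseteq> B"
        using finite_subset_Union_chain[OF \<open>finite T\<close> _ \<open>C \<noteq> {}\<close> C] by blast
      with CF show False by (auto simp: F_def)
    qed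
    ultimately show ?thesis using CF by (auto simp: F_def)
  qed
  ultimately obtain M where "M \<in> F" and M_max: "\<And>N. N \<in> F \<Longrightarrow> M \<subseteq> N \<Longrightarrow> N = M"
    using subset_Zorn_nonempty[of F] by blast
  show ?thesis
  proof (rule that, unfold_locales)
    show "add_subgroup (add_span T)" by (rule add_subgroup_add_span)
    show "add_subgroup M" "M \<subseteq> add_span T" using \<open>M \<in> F\<close> by (simp_all add: F_def)
    show "M \<noteq> add_span T" using \<open>M \<in> F\<close> add_span_superset[of T] by (auto simp: F_def)
    fix N assume N: "add_subgroup N" "M \<subseteq> N" "N \<subseteq> add_span T"
    show "N = M \<or> N = add_span T"
    proof (cases "T \<subseteq> N")
      case True
      then show ?thesis using N add_span_least[of N T] by blast
    next
      case False
      then show ?thesis using N M_max by (simp add: F_def)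
    qed
  qed
qed

lemma finitely_generated_hom_onto_zmod:
  fixes T :: "'a::ab_group_add set"
  assumes "finite T" and "add_span T \<noteq> {0}"
  obtains p \<phi> where "prime p" "hom_onto_zmod (add_span T) p \<phi>"
proof -
  obtain M where "maximal_add_subgroup (add_span T) M"
    using finitely_generated_ex_maximal_subgroup[OF assms] .
  then show ?thesis using maximal_add_subgroup.ex_hom_onto_zmod that by blast
qed

section \<open>Orbits of the translations of a quandle\<close>

definition translation_step :: "'e set \<Rightarrow> ('e \<Rightarrow> 'e \<Rightarrow> 'e) \<Rightarrow> ('e \<times> 'e) set" where
  "translation_step E opE = {(y, opE x y) | x y. x \<in> E \<and> y \<in> E}"

definition orbit_rel :: "'e set \<Rightarrow> ('e \<Rightarrow> 'e \<Rightarrow> 'e) \<Rightarrow> ('e \<times> 'e) set" where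
  "orbit_rel E opE = (translation_step E opE \<union> (translation_step E opE)\<inverse>)\<^sup>*"

lemma quandle_connected_iff_orbit_rel:
  "quandle_connected E opE \<longleftrightarrow> (\<forall>u\<in>E. \<forall>v\<in>E. (u, v) \<in> orbit_rel E opE)"
  by (simp add: quandle_connected_def orbit_rel_def translation_step_def Let_def)

lemma orbit_rel_refl [simp]: "(u, u) \<in> orbit_rel E opE"
  by (simp add: orbit_rel_def)

lemma orbit_rel_sym: "(u, v) \<in> orbit_rel E opE \<Longrightarrow> (v, u) \<in> orbit_rel E opE"
  unfolding orbit_rel_def by (meson sym_Un_converse sym_rtrancl symD)

lemma orbit_rel_trans:
  "(u, v) \<in> orbit_rel E opE \<Longrightarrow> (v, w) \<in> orbit_rel E opE \<Longrightarrow> (u, w) \<in> orbit_rel E opE"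
  unfolding orbit_rel_def by (rule rtrancl_trans)

lemma orbit_rel_step: "x \<in> E \<Longrightarrow> y \<in> E \<Longrightarrow> (y, opE x y) \<in> orbit_rel E opE"
  unfolding orbit_rel_def translation_step_def by blast

lemma orbit_rel_induct [consumes 1, case_names base step step_inv]:
  assumes "(u, v) \<in> orbit_rel E opE" and "P u"
    and "\<And>x y. x \<in> E \<Longrightarrow> y \<in> E \<Longrightarrow> (u, y) \<in> orbit_rel E opE \<Longrightarrow> P y \<Longrightarrow> P (opE x y)"
    and "\<And>x y. x \<in> E \<Longrightarrow> y \<in> E \<Longrightarrow> (u, opE x y) \<in> orbit_rel E opE \<Longrightarrow> P (opE x y) \<Longrightarrow> P y"
  shows "P v"
  using assms(1) unfolding orbit_rel_def
proof (induction rule: rtrancl_induct)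
  case (step v w)
  then show ?case using assms(3,4) unfolding orbit_rel_def translation_step_def by blast
qed (rule assms(2))

lemma orbit_rel_closed:
  assumes "(u, v) \<in> orbit_rel E opE" "u \<in> E" and "\<And>x y. x \<in> E \<Longrightarrow> y \<in> E \<Longrightarrow> opE x y \<in> E"
  shows "v \<in> E"
  using assms(1) by (induction rule: orbit_rel_induct) (simp_all add: assms(2,3))

lemma quandle_connectedI_base:
  assumes "\<And>v. v \<in> E \<Longrightarrow> (u, v) \<in> orbit_rel E opE"
  shows "quandle_connected E opE"
  unfolding quandle_connected_iff_orbit_rel using assms orbit_rel_sym orbit_rel_trans by metis

lemma quandle_connected_image:
  assumes "quandle_connected E opE" and "f ` E = E'"
    and hom: "\<And>x y. x \<in> E \<Longrightarrow> y \<in> E \<Longrightarrow> f (opE x y) = opE' (f x) (f y)"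
  shows "quandle_connected E' opE'"
proof -
  have "(f u, f v) \<in> orbit_rel E' opE'" if "(u, v) \<in> orbit_rel E opE" for u v
    using that
  proof (induction rule: orbit_rel_induct)
    case (step x y)
    then show ?case
      using orbit_rel_trans orbit_rel_step[of "f x" E' "f y" opE'] hom assms(2) by fastforce
  next
    case (step_inv x y)
    then show ?case
      using orbit_rel_trans orbit_rel_sym orbit_rel_step[of "f x" E' "f y" opE'] hom assms(2) by fastforce
  qed simp
  with assms(1,2) show ?thesis unfolding quandle_connected_iff_orbit_rel by blast
qed

section \<open>Covers and extensions\<close>

lemma quandle_op_closed: "quandle Q op \<Longrightarrow> x \<in> Q \<Longrightarrow> y \<in> Q \<Longrightarrow> op x y \<in> Q"
  unfolding quandle_def by (meson bij_betwE)

lemma quandle_transport: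
  assumes f: "bij_betw f E E'" and quandle: "quandle E opE"
  shows "quandle E' (\<lambda>u v. f (opE (inv_into E f u) (inv_into E f v)))"
  unfolding quandle_def
proof (intro conjI ballI)
  let ?g = "inv_into E f"
  have g: "bij_betw ?g E' E" using f by (rule bij_betw_inv_into)
  have gE: "?g u \<in> E" if "u \<in> E'" for u using g that by (meson bij_betwE)
  have g_f_op: "?g (f (opE (?g u) (?g v))) = opE (?g u) (?g v)" if "u \<in> E'" "v \<in> E'" for u v
    using f gE[OF that(1)] gE[OF that(2)] quandle_op_closed[OF quandle]
    by (simp add: bij_betw_inv_into_left)
  fix u assume "u \<in> E'"
  have "bij_betw (opE (?g u)) E E" using quandle gE[OF \<open>u \<in> E'\<close>] by (simp add: quandle_def)
  then show "bij_betw (\<lambda>v. f (opE (?g u) (?g v))) E' E'"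
    using bij_betw_trans[OF bij_betw_trans[OF g] f] by (simp add: comp_def)
  fix v w assume "v \<in> E'" "w \<in> E'"
  with \<open>u \<in> E'\<close> have "opE (?g u) (opE (?g v) (?g w)) = opE (opE (?g u) (?g v)) (opE (?g u) (?g w))"
    using quandle gE unfolding quandle_def by blast
  then show "f (opE (?g u) (?g (f (opE (?g v) (?g w)))))
      = f (opE (?g (f (opE (?g u) (?g v)))) (?g (f (opE (?g u) (?g w)))))"
    by (simp only: g_f_op \<open>u \<in> E'\<close> \<open>v \<in> E'\<close> \<open>w \<in> E'\<close>)
next
  fix u assume "u \<in> E'"
  then have "opE (inv_into E f u) (inv_into E f u) = inv_into E f u"
    using quandle f by (simp add: quandle_def bij_betwE[OF bij_betw_inv_into])
  with \<open>u \<in> E'\<close> show "f (opE (inv_into E f u) (inv_into E f u)) = u"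
    using f by (simp add: bij_betw_inv_into_right)
qed

lemma quandle_cover_transport:
  assumes f: "bij_betw f E E'" and cover: "quandle_cover E opE Q op \<pi>"
  shows "quandle_cover E' (\<lambda>u v. f (opE (inv_into E f u) (inv_into E f v))) Q op (\<pi> \<circ> inv_into E f)"
  unfolding quandle_cover_def
proof (intro conjI ballI impI)
  let ?g = "inv_into E f"
  have g: "bij_betw ?g E' E" using f by (rule bij_betw_inv_into)
  have gE: "?g u \<in> E" if "u \<in> E'" for u using g that by (meson bij_betwE)
  have quandle: "quandle E opE" and "\<pi> ` E = Q"
    and hom: "\<And>u v. u \<in> E \<Longrightarrow> v \<in> E \<Longrightarrow> \<pi> (opE u v) = op (\<pi> u) (\<pi> v)"
    and fibre: "\<And>u v w. u \<in> E \<Longrightarrow> v \<in> E \<Longrightarrow> w \<in> E \<Longrightarrow> \<pi> u = \<pi> v \<Longrightarrow> opE u w = opE v w"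
    using cover unfolding quandle_cover_def by blast+
  show "quandle E' (\<lambda>u v. f (opE (?g u) (?g v)))" using f quandle by (rule quandle_transport)
  show "(\<pi> \<circ> ?g) ` E' = Q"
    unfolding image_comp[symmetric] using \<open>\<pi> ` E = Q\<close> bij_betw_imp_surj_on[OF g] by simp
  fix u v assume "u \<in> E'" "v \<in> E'"
  have "?g (f (opE (?g u) (?g v))) = opE (?g u) (?g v)"
    using f gE \<open>u \<in> E'\<close> \<open>v \<in> E'\<close> quandle_op_closed[OF quandle]
    by (simp add: bij_betw_inv_into_left)
  with \<open>u \<in> E'\<close> \<open>v \<in> E'\<close> show "(\<pi> \<circ> ?g) (f (opE (?g u) (?g v))) = op ((\<pi> \<circ> ?g) u) ((\<pi> \<circ> ?g) v)"
    using hom gE by simp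
  fix w assume "w \<in> E'" and "(\<pi> \<circ> ?g) u = (\<pi> \<circ> ?g) v"
  with \<open>u \<in> E'\<close> \<open>v \<in> E'\<close> have "opE (?g u) (?g w) = opE (?g v) (?g w)"
    using fibre gE by simp
  then show "f (opE (?g u) (?g w)) = f (opE (?g v) (?g w))" by simp
qed

lemma quandle_connected_transport:
  assumes f: "bij_betw f E E'" and connected: "quandle_connected E opE"
  shows "quandle_connected E' (\<lambda>u v. f (opE (inv_into E f u) (inv_into E f v)))"
  using connected bij_betw_imp_surj_on[OF f]
proof (rule quandle_connected_image[where opE' = "\<lambda>u v. f (opE (inv_into E f u) (inv_into E f v))"])
  fix x y assume "x \<in> E" "y \<in> E"
  then show "f (opE x y) = f (opE (inv_into E f (f x)) (inv_into E f (f y)))"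
    using f by (simp add: bij_betw_inv_into_left)
qed

lemma finite_connected_cover_on_nat:
  assumes "finite E" and "quandle_cover E opE Q op \<pi>" and "quandle_connected E opE"
  obtains E' :: "nat set" and opE' \<pi>'
  where "quandle_cover E' opE' Q op \<pi>'" "quandle_connected E' opE'" "finite E'" "card E' = card E"
proof -
  obtain f where f: "bij_betw f E {0..<card E}" using ex_bij_betw_finite_nat[OF assms(1)] by blast
  show ?thesis
    by (rule that[OF quandle_cover_transport[OF f assms(2)] quandle_connected_transport[OF f assms(3)]])
      simp_all
qed

(* The extension Q \<times>\<^sub>c Z/pZ by a Z/pZ-valued cocycle c, with residues represented in {0..<p}. *)
fun zmod_ext_op :: "('q \<Rightarrow> 'q \<Rightarrow> 'q) \<Rightarrow> nat \<Rightarrow> ('q \<Rightarrow> 'q \<Rightarrow> int) \<Rightarrow> 'q \<times> int \<Rightarrow> 'q \<times> int \<Rightarrow> 'q \<times> int"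
  where "zmod_ext_op op p c (x, i) (y, j) = (op x y, (c x y + j) mod int p)"

lemma zmod_ext_translation_bij:
  assumes quandle: "quandle Q op" and u: "u \<in> Q \<times> {0..<int p}"
  shows "bij_betw (zmod_ext_op op p c u) (Q \<times> {0..<int p}) (Q \<times> {0..<int p})"
proof -
  let ?E = "Q \<times> {0..<int p}"
  obtain x i where u: "u = (x, i)" "x \<in> Q" and "0 < p" using u by auto
  have bij: "bij_betw (op x) Q Q" using quandle \<open>x \<in> Q\<close> by (simp add: quandle_def)
  have "inj_on (zmod_ext_op op p c u) ?E"
  proof (rule inj_onI)
    fix v w assume "v \<in> ?E" "w \<in> ?E" and eq: "zmod_ext_op op p c u v = zmod_ext_op op p c u w"
    then obtain y j y' j' where vw: "v = (y, j)" "w = (y', j')" "y \<in> Q" "y' \<in> Q"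
      "0 \<le> j" "j < int p" "0 \<le> j'" "j' < int p" by auto
    have "y = y'" using eq bij_betw_imp_inj_on[OF bij] vw u by (auto dest: inj_onD)
    with eq have "(c x y + j) mod int p = (c x y + j') mod int p" by (simp add: u vw)
    then have "j mod int p = j' mod int p" by (simp add: mod_eq_dvd_iff)
    with vw \<open>y = y'\<close> show "v = w" by simp
  qed
  moreover have "?E \<subseteq> zmod_ext_op op p c u ` ?E"
  proof
    fix v assume "v \<in> ?E"
    then obtain z k where v: "v = (z, k)" "z \<in> Q" "0 \<le> k" "k < int p" by auto
    then obtain y where "y \<in> Q" "z = op x y" using bij by (metis bij_betw_iff_bijections)
    moreover have "(c x y + (k - c x y) mod int p) mod int p = k"
      using v by (simp add: mod_add_right_eq)
    ultimately have "v = zmod_ext_op op p c u (y, (k - c x y) mod int p)"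
      by (simp add: u v)
    moreover have "(y, (k - c x y) mod int p) \<in> ?E" using \<open>y \<in> Q\<close> \<open>0 < p\<close> by simp
    ultimately show "v \<in> zmod_ext_op op p c u ` ?E" by blast
  qed
  moreover have "zmod_ext_op op p c u ` ?E \<subseteq> ?E"
    using quandle_op_closed[OF quandle] \<open>0 < p\<close> u by auto
  ultimately show ?thesis by (simp add: bij_betw_def)
qed

lemma zmod_ext_quandle:
  assumes quandle: "quandle Q op"
    and cocycle: "\<And>x y z. x \<in> Q \<Longrightarrow> y \<in> Q \<Longrightarrow> z \<in> Q \<Longrightarrow>
      (c (op x y) (op x z) + c x z) mod int p = (c x (op y z) + c y z) mod int p"
    and diagonal: "\<And>x. x \<in> Q \<Longrightarrow> c x x mod int p = 0"
  shows "quandle (Q \<times> {0..<int p}) (zmod_ext_op op p c)"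
  unfolding quandle_def
proof (intro conjI ballI)
  fix u assume "u \<in> Q \<times> {0..<int p}"
  then show "bij_betw (zmod_ext_op op p c u) (Q \<times> {0..<int p}) (Q \<times> {0..<int p})"
    by (rule zmod_ext_translation_bij[OF quandle])
next
  fix u v w assume "u \<in> Q \<times> {0..<int p}" "v \<in> Q \<times> {0..<int p}" "w \<in> Q \<times> {0..<int p}"
  then obtain x i y j z k where xyz: "u = (x, i)" "v = (y, j)" "w = (z, k)" "x \<in> Q" "y \<in> Q" "z \<in> Q"
    by (metis mem_Sigma_iff prod.collapse)
  have mod_shift: "(a + (b + k) mod int p) mod int p = ((a + b) mod int p + k) mod int p" for a b :: int
    by (simp add: mod_add_right_eq mod_add_left_eq add.assoc)
  have "(c x (op y z) + (c y z + k) mod int p) mod int p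
      = (c (op x y) (op x z) + (c x z + k) mod int p) mod int p"
    by (simp only: mod_shift cocycle[OF xyz(4-6)])
  moreover have "op x (op y z) = op (op x y) (op x z)"
    using quandle xyz by (simp add: quandle_def)
  ultimately show "zmod_ext_op op p c u (zmod_ext_op op p c v w)
      = zmod_ext_op op p c (zmod_ext_op op p c u v) (zmod_ext_op op p c u w)"
    by (simp add: xyz)
next
  fix u assume "u \<in> Q \<times> {0..<int p}"
  then obtain x i where u: "u = (x, i)" "x \<in> Q" "0 \<le> i" "i < int p" by auto
  have "(c x x + i) mod int p = (c x x mod int p + i) mod int p" by (simp add: mod_add_left_eq)
  with u show "zmod_ext_op op p c u u = u" using quandle diagonal by (simp add: quandle_def)
qed

lemma zmod_ext_cover:
  assumes "quandle Q op" and "0 < p"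
    and "\<And>x y z. x \<in> Q \<Longrightarrow> y \<in> Q \<Longrightarrow> z \<in> Q \<Longrightarrow>
      (c (op x y) (op x z) + c x z) mod int p = (c x (op y z) + c y z) mod int p"
    and "\<And>x. x \<in> Q \<Longrightarrow> c x x mod int p = 0"
  shows "quandle_cover (Q \<times> {0..<int p}) (zmod_ext_op op p c) Q op fst"
proof -
  have "fst ` (Q \<times> {0..<int p}) = Q" using \<open>0 < p\<close> by force
  moreover have "fst (zmod_ext_op op p c u v) = op (fst u) (fst v)" for u v
    by (cases u; cases v) simp
  moreover have "zmod_ext_op op p c u w = zmod_ext_op op p c v w" if "fst u = fst v" for u v w
    using that by (cases u; cases v; cases w) simp
  ultimately show ?thesis
    using zmod_ext_quandle[OF assms(1,3,4)] unfolding quandle_cover_def by blast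
qed

section \<open>The orbit of a base point in the extension \<open>Q \<times>\<^sub>\<theta> A\<close>\<close>

fun cocycle_ext_op :: "('q \<Rightarrow> 'q \<Rightarrow> 'q) \<Rightarrow> ('q \<Rightarrow> 'q \<Rightarrow> 'a::ab_group_add) \<Rightarrow> 'q \<times> 'a \<Rightarrow> 'q \<times> 'a \<Rightarrow> 'q \<times> 'a"
  where "cocycle_ext_op op \<theta> (x, a) (y, b) = (op x y, \<theta> x y + b)"

locale connected_cocycle =
  fixes Q :: "'q set" and op :: "'q \<Rightarrow> 'q \<Rightarrow> 'q" and \<theta> :: "'q \<Rightarrow> 'q \<Rightarrow> 'a::ab_group_add"
    and q0 :: 'q
  assumes quandle: "quandle Q op" and connected: "quandle_connected Q op"
    and cocycle: "quandle_cocycle Q op \<theta>" and q0: "q0 \<in> Q"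
begin

abbreviation linked :: "'q \<times> 'a \<Rightarrow> 'q \<times> 'a \<Rightarrow> bool" where
  "linked u v \<equiv> (u, v) \<in> orbit_rel (Q \<times> UNIV) (cocycle_ext_op op \<theta>)"

lemma linked_step: "x \<in> Q \<Longrightarrow> y \<in> Q \<Longrightarrow> linked (y, b) (op x y, \<theta> x y + b)"
  using orbit_rel_step[of "(x, 0)" "Q \<times> UNIV" "(y, b)" "cocycle_ext_op op \<theta>"] by simp

lemma linked_shift:
  assumes "linked u v" shows "linked (fst u, snd u + d) (fst v, snd v + d)"
  using assms
proof (induction rule: orbit_rel_induct)
  case (step x y)
  obtain x1 x2 y1 y2 where xy: "x = (x1, x2)" "y = (y1, y2)" "x1 \<in> Q" "y1 \<in> Q"
    using step(1,2) by auto
  have "linked (y1, y2 + d) (op x1 y1, \<theta> x1 y1 + y2 + d)"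
    using linked_step[OF xy(3,4), of "y2 + d"] by (simp add: add.assoc)
  with orbit_rel_trans[OF step(4)] show ?case by (simp add: xy)
next
  case (step_inv x y)
  obtain x1 x2 y1 y2 where xy: "x = (x1, x2)" "y = (y1, y2)" "x1 \<in> Q" "y1 \<in> Q"
    using step_inv(1,2) by auto
  have "linked (y1, y2 + d) (op x1 y1, \<theta> x1 y1 + y2 + d)"
    using linked_step[OF xy(3,4), of "y2 + d"] by (simp add: add.assoc)
  with orbit_rel_trans[OF step_inv(4) orbit_rel_sym] show ?case by (simp add: xy)
qed simp

lemma ex_linked_lift:
  assumes "y \<in> Q" shows "\<exists>b. linked (q0, 0) (y, b)"
proof -
  from connected q0 assms q0 have "(q0, y) \<in> orbit_rel Q op" by (simp add: quandle_connected_iff_orbit_rel)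
  then show ?thesis
  proof (induction rule: orbit_rel_induct)
    case base
    show ?case by (auto intro: exI[of _ 0])
  next
    case (step x y)
    then show ?case using orbit_rel_trans[OF _ linked_step[OF step(1,2)]] by blast
  next
    case (step_inv x y)
    then obtain b where "linked (q0, 0) (op x y, b)" by blast
    moreover have "linked (y, b - \<theta> x y) (op x y, b)"
      using linked_step[OF step_inv(1,2), of "b - \<theta> x y"] by simp
    ultimately have "linked (q0, 0) (y, b - \<theta> x y)" by (blast intro: orbit_rel_trans orbit_rel_sym)
    then show ?case by blast
  qed
qed

(* Normalised by lift q0 = 0, so that the fibre over q0 is generated by \<eta> (fibre_eq_add_span). *)
definition lift :: "'q \<Rightarrow> 'a" where
  "lift y = (if y = q0 then 0 else SOME b. linked (q0, 0) (y, b))"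

lemma lift_q0 [simp]: "lift q0 = 0"
  by (simp add: lift_def)

lemma linked_lift: "y \<in> Q \<Longrightarrow> linked (q0, 0) (y, lift y)"
  using ex_linked_lift[of y] by (auto simp: lift_def intro: someI_ex)

definition fibre :: "'a set" where
  "fibre = {c. linked (q0, 0) (q0, c)}"

lemma linked_fst_in: "linked (q0, 0) v \<Longrightarrow> fst v \<in> Q"
  using orbit_rel_closed[of "(q0, 0)" v "Q \<times> UNIV" "cocycle_ext_op op \<theta>"] q0
    quandle_op_closed[OF quandle]
  by force

lemma linked_imp_fibre:
  assumes "linked (q0, 0) (y, b)" shows "b - lift y \<in> fibre"
proof -
  have "linked (y, lift y) (q0, 0)"
    using orbit_rel_sym[OF linked_lift] linked_fst_in[OF assms] by simp
  from linked_shift[OF this, of "b - lift y"] have "linked (y, b) (q0, b - lift y)" by simp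
  with orbit_rel_trans[OF assms] show ?thesis by (simp add: fibre_def)
qed

lemma add_subgroup_fibre: "add_subgroup fibre"
proof (rule add_subgroupI)
  show "0 \<in> fibre" by (simp add: fibre_def)
next
  fix c d assume "c \<in> fibre" "d \<in> fibre"
  from linked_shift[of "(q0, 0)" "(q0, d)" c] \<open>d \<in> fibre\<close> have "linked (q0, c) (q0, d + c)"
    by (simp add: fibre_def)
  with \<open>c \<in> fibre\<close> show "c + d \<in> fibre"
    using orbit_rel_trans[of "(q0, 0)" "(q0, c)"] by (simp add: fibre_def add.commute)
next
  fix c assume "c \<in> fibre"
  from linked_shift[of "(q0, 0)" "(q0, c)" "- c"] \<open>c \<in> fibre\<close> have "linked (q0, - c) (q0, 0)"
    by (simp add: fibre_def)
  then show "- c \<in> fibre" using orbit_rel_sym by (auto simp: fibre_def)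
qed

definition \<eta> :: "'q \<Rightarrow> 'q \<Rightarrow> 'a" where
  "\<eta> x y = \<theta> x y + lift y - lift (op x y)"

lemma \<eta>_in_fibre: "x \<in> Q \<Longrightarrow> y \<in> Q \<Longrightarrow> \<eta> x y \<in> fibre"
  using linked_imp_fibre[OF orbit_rel_trans[OF linked_lift linked_step]] quandle_op_closed[OF quandle]
  by (simp add: \<eta>_def diff_add_eq)

lemma \<eta>_cocycle:
  assumes "x \<in> Q" "y \<in> Q" "z \<in> Q"
  shows "\<eta> (op x y) (op x z) + \<eta> x z = \<eta> x (op y z) + \<eta> y z"
proof -
  have "\<theta> (op x y) (op x z) + \<theta> x z = \<theta> x (op y z) + \<theta> y z"
    using cocycle assms by (simp add: quandle_cocycle_def)
  moreover have "op x (op y z) = op (op x y) (op x z)" using quandle assms by (simp add: quandle_def)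
  ultimately show ?thesis by (simp add: \<eta>_def algebra_simps)
qed

lemma \<eta>_diagonal: "x \<in> Q \<Longrightarrow> \<eta> x x = 0"
  using cocycle quandle by (simp add: \<eta>_def quandle_cocycle_def quandle_def)

lemma fibre_eq_add_span: "fibre = add_span (case_prod \<eta> ` (Q \<times> Q))"
proof
  show "add_span (case_prod \<eta> ` (Q \<times> Q)) \<subseteq> fibre"
    by (rule add_span_least[OF add_subgroup_fibre]) (auto simp: \<eta>_in_fibre)
next
  let ?S = "add_span (case_prod \<eta> ` (Q \<times> Q))"
  have S: "add_subgroup ?S" by (rule add_subgroup_add_span)
  have \<eta>_S: "\<eta> x y \<in> ?S" if "x \<in> Q" "y \<in> Q" for x y
    using that add_span_superset by fast
  have reach: "snd v - lift (fst v) \<in> ?S" if "linked (q0, 0) v" for v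
    using that
  proof (induction rule: orbit_rel_induct)
    case base
    show ?case using S by (simp add: add_subgroup_zero)
  next
    case (step x y)
    obtain x1 x2 y1 y2 where xy: "x = (x1, x2)" "y = (y1, y2)" "x1 \<in> Q" "y1 \<in> Q"
      using step(1,2) by auto
    have "\<theta> x1 y1 + y2 - lift (op x1 y1) = \<eta> x1 y1 + (y2 - lift y1)"
      by (simp add: \<eta>_def algebra_simps)
    with add_subgroup_add[OF S \<eta>_S[OF xy(3,4)]] step(4) show ?case
      by (simp only: xy cocycle_ext_op.simps fst_conv snd_conv)
  next
    case (step_inv x y)
    obtain x1 x2 y1 y2 where xy: "x = (x1, x2)" "y = (y1, y2)" "x1 \<in> Q" "y1 \<in> Q"
      using step_inv(1,2) by auto
    have "y2 - lift y1 = (\<theta> x1 y1 + y2 - lift (op x1 y1)) - \<eta> x1 y1"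
      by (simp add: \<eta>_def algebra_simps)
    with add_subgroup_diff[OF S _ \<eta>_S[OF xy(3,4)]] step_inv(4) show ?case
      by (simp only: xy cocycle_ext_op.simps fst_conv snd_conv)
  qed
  show "fibre \<subseteq> ?S"
  proof
    fix c assume "c \<in> fibre"
    with reach[of "(q0, c)"] show "c \<in> ?S" by (simp add: fibre_def)
  qed
qed

lemma cohomologous_trivial_if_fibre_trivial:
  assumes "fibre = {0}" shows "cohomologous_trivial Q op \<theta>"
  unfolding cohomologous_trivial_def
proof (intro exI[of _ "\<lambda>y b. lift y + b"] conjI ballI)
  fix x y assume "x \<in> Q" "y \<in> Q"
  then have \<theta>_eq: "\<theta> x y = lift (op x y) - lift y"
    using \<eta>_in_fibre[of x y] assms by (simp add: \<eta>_def algebra_simps)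
  have inv_eq: "inv (\<lambda>b. lift y + b) = (\<lambda>b. b - lift y)"
    by (rule inv_equality) (simp_all add: algebra_simps)
  show "(\<lambda>b. \<theta> x y + b) = (\<lambda>b. lift (op x y) + b) \<circ> inv (\<lambda>b. lift y + b)"
    unfolding inv_eq \<theta>_eq by (simp add: fun_eq_iff algebra_simps)
next
  fix y
  show "bij (\<lambda>b. lift y + b)"
    by (rule bij_betw_byWitness[where f' = "\<lambda>b. b - lift y"]) (auto simp: algebra_simps)
qed

context
  fixes p :: nat and \<phi> :: "'a \<Rightarrow> int"
  assumes \<phi>: "hom_onto_zmod fibre p \<phi>" and p_pos: "0 < p"
begin

definition zmod_proj :: "'q \<times> 'a \<Rightarrow> 'q \<times> int" where
  "zmod_proj v = (fst v, \<phi> (snd v - lift (fst v)) mod int p)"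

lemma zmod_proj_in: "linked (q0, 0) v \<Longrightarrow> zmod_proj v \<in> Q \<times> {0..<int p}"
  using linked_fst_in p_pos by (simp add: zmod_proj_def)

lemma zmod_proj_translation:
  assumes "x \<in> Q" and "linked (q0, 0) (y, b)"
  shows "zmod_proj (cocycle_ext_op op \<theta> (x, a) (y, b))
    = zmod_ext_op op p (\<lambda>x y. \<phi> (\<eta> x y)) (x, 0) (zmod_proj (y, b))"
proof -
  have "y \<in> Q" using linked_fst_in[OF assms(2)] by simp
  have eq: "\<theta> x y + b - lift (op x y) = \<eta> x y + (b - lift y)" by (simp add: \<eta>_def algebra_simps)
  have "\<phi> (\<theta> x y + b - lift (op x y)) mod int p = (\<phi> (\<eta> x y) + \<phi> (b - lift y)) mod int p"
    unfolding eq using \<phi> \<eta>_in_fibre[OF assms(1) \<open>y \<in> Q\<close>] linked_imp_fibre[OF assms(2)]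
    by (simp add: hom_onto_zmod_def)
  then show ?thesis by (simp add: zmod_proj_def mod_add_right_eq)
qed

lemma orbit_rel_zmod_proj:
  assumes "linked (q0, 0) v"
  shows "(zmod_proj (q0, 0), zmod_proj v)
    \<in> orbit_rel (Q \<times> {0..<int p}) (zmod_ext_op op p (\<lambda>x y. \<phi> (\<eta> x y)))"
    (is "_ \<in> orbit_rel ?E ?op")
  using assms
proof (induction rule: orbit_rel_induct)
  case (step x y)
  obtain x1 x2 y1 y2 where xy: "x = (x1, x2)" "y = (y1, y2)" "x1 \<in> Q" using step(1,2) by auto
  have "(zmod_proj y, ?op (x1, 0) (zmod_proj y)) \<in> orbit_rel ?E ?op"
    using zmod_proj_in[OF step(3)] xy(3) p_pos by (intro orbit_rel_step[where opE = ?op]) auto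
  moreover have "zmod_proj (cocycle_ext_op op \<theta> x y) = ?op (x1, 0) (zmod_proj y)"
    using zmod_proj_translation[OF xy(3)] step(3) by (simp add: xy)
  ultimately show ?case using orbit_rel_trans[OF step(4)] by simp
next
  case (step_inv x y)
  obtain x1 x2 y1 y2 where xy: "x = (x1, x2)" "y = (y1, y2)" "x1 \<in> Q" using step_inv(1,2) by auto
  have "linked (q0, 0) y"
    using orbit_rel_trans[OF step_inv(3) orbit_rel_sym[OF orbit_rel_step[OF step_inv(1,2)]]] .
  then have "(zmod_proj y, ?op (x1, 0) (zmod_proj y)) \<in> orbit_rel ?E ?op"
    using zmod_proj_in xy(3) p_pos by (intro orbit_rel_step[where opE = ?op]) auto
  moreover have "zmod_proj (cocycle_ext_op op \<theta> x y) = ?op (x1, 0) (zmod_proj y)"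
    using zmod_proj_translation[OF xy(3)] \<open>linked (q0, 0) y\<close> by (simp add: xy)
  ultimately show ?case using orbit_rel_trans[OF step_inv(4) orbit_rel_sym] by simp
qed simp

lemma zmod_proj_onto:
  assumes "w \<in> Q \<times> {0..<int p}" shows "\<exists>v. linked (q0, 0) v \<and> zmod_proj v = w"
proof -
  obtain q j where w: "w = (q, j)" "q \<in> Q" "0 \<le> j" "j < int p" using assms by auto
  obtain z where "z \<in> fibre" "\<phi> z mod int p = j mod int p"
    using \<phi> unfolding hom_onto_zmod_def by blast
  moreover have "linked (q0, z) (q, lift q + z)"
    using linked_shift[OF linked_lift[OF w(2)], of z] by simp
  ultimately have "linked (q0, 0) (q, lift q + z)" "zmod_proj (q, lift q + z) = w"
    using w orbit_rel_trans[of "(q0, 0)" "(q0, z)"] by (simp_all add: fibre_def zmod_proj_def)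
  then show ?thesis by blast
qed

lemma zmod_ext_connected:
  "quandle_connected (Q \<times> {0..<int p}) (zmod_ext_op op p (\<lambda>x y. \<phi> (\<eta> x y)))"
  using orbit_rel_zmod_proj zmod_proj_onto by (metis quandle_connectedI_base)

end

lemma ex_connected_zmod_cover:
  assumes "finite Q" and "\<not> cohomologous_trivial Q op \<theta>"
  obtains p c where "prime p"
    and "quandle_cover (Q \<times> {0..<int p}) (zmod_ext_op op p c) Q op fst"
    and "quandle_connected (Q \<times> {0..<int p}) (zmod_ext_op op p c)"
proof -
  have "add_span (case_prod \<eta> ` (Q \<times> Q)) \<noteq> {0}"
    using assms(2) cohomologous_trivial_if_fibre_trivial fibre_eq_add_span by auto
  then obtain p \<phi> where "prime p" and \<phi>: "hom_onto_zmod fibre p \<phi>"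
    using finitely_generated_hom_onto_zmod[of "case_prod \<eta> ` (Q \<times> Q)"] \<open>finite Q\<close>
    by (auto simp: fibre_eq_add_span)
  then have "0 < p" by (simp add: prime_gt_0_nat)
  have \<phi>_add: "\<phi> (x + y) mod int p = (\<phi> x + \<phi> y) mod int p" if "x \<in> fibre" "y \<in> fibre" for x y
    using \<phi> that by (simp add: hom_onto_zmod_def)
  have "quandle_cover (Q \<times> {0..<int p}) (zmod_ext_op op p (\<lambda>x y. \<phi> (\<eta> x y))) Q op fst"
  proof (rule zmod_ext_cover[OF quandle \<open>0 < p\<close>])
    fix x y z assume "x \<in> Q" "y \<in> Q" "z \<in> Q"
    then show "(\<phi> (\<eta> (op x y) (op x z)) + \<phi> (\<eta> x z)) mod int p
        = (\<phi> (\<eta> x (op y z)) + \<phi> (\<eta> y z)) mod int p"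
      using \<phi>_add \<eta>_cocycle \<eta>_in_fibre quandle_op_closed[OF quandle] by metis
  next
    fix x assume "x \<in> Q"
    then show "\<phi> (\<eta> x x) mod int p = 0"
      using hom_onto_zmod_zero[OF \<phi>] add_subgroup_zero[OF add_subgroup_fibre] by (simp add: \<eta>_diagonal)
  qed
  from that[OF \<open>prime p\<close> this zmod_ext_connected[OF \<phi> \<open>0 < p\<close>]] show ?thesis .
qed

end

theorem proposition2p11:
  fixes Q :: "'q set" and op :: "'q \<Rightarrow> 'q \<Rightarrow> 'q"
    and \<theta> :: "'q \<Rightarrow> 'q \<Rightarrow> 'a::ab_group_add"
  assumes "finite Q"
    and "quandle Q op"
    and "quandle_connected Q op"
    and "quandle_cocycle Q op \<theta>"
    and "\<not> cohomologous_trivial Q op \<theta>"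
  shows "\<exists>p::nat. prime p \<and>
           (\<exists>(E :: nat set) opE (\<pi> :: nat \<Rightarrow> 'q).
              quandle_cover E opE Q op \<pi> \<and> quandle_connected E opE \<and>
              finite E \<and> card E = p * card Q)"
proof -
  have "Q \<noteq> {}"
    using assms(5) by (auto simp: cohomologous_trivial_def intro: exI[of _ "\<lambda>_. id"])
  then obtain q0 where "q0 \<in> Q" by blast
  then interpret connected_cocycle Q op \<theta> q0
    using assms(2-4) by unfold_locales
  obtain p c where "prime p"
    and cover: "quandle_cover (Q \<times> {0..<int p}) (zmod_ext_op op p c) Q op fst"
    and conn: "quandle_connected (Q \<times> {0..<int p}) (zmod_ext_op op p c)"
    using ex_connected_zmod_cover[OF assms(1,5)] .
  obtain E :: "nat set" and opE \<pi> where "quandle_cover E opE Q op \<pi>" "quandle_connected E opE"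
    "finite E" "card E = card (Q \<times> {0..<int p})"
    using finite_connected_cover_on_nat[OF _ cover conn] \<open>finite Q\<close> by blast
  moreover have "card (Q \<times> {0..<int p}) = p * card Q" by (simp add: card_cartesian_product)
  ultimately show ?thesis using \<open>prime p\<close> by metis
qed

end
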